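(* Let $\mathcal{C}$ be a nonempty $3$-divisible set of points of $\mathrm{PG}(v-1,3)$ with $v\ge2$, and let $n=|\mathcal{C}|$. Then $n=4$ or $n\ge8$. Moreover, for $n=4$ and for every $n\ge8$ there exists a nonempty $3$-divisible set of $n$ points in $\mathrm{PG}(v-1,3)$ for some $v\ge2$.
   Context: $\mathrm{PG}(v-1,3)$ is the set of $1$-dimensional subspaces (points) of $\mathbb{F}_3^v$; hyperplanes are the $(v-1)$-dimensional subspaces. A set $\mathcal{C}$ of points is $\Delta$-divisible if there is an integer $u$ with $|\mathcal{C}\cap H|\equiv u\pmod{\Delta}$ for every hyperplane $H$, where $\mathcal{C}\cap H$ is the set of points of $\mathcal{C}$ contained in $H$. *)

theory Defs
  imports Main
begin

definition F3vecs :: "nat \<Rightarrow> (nat \<Rightarrow> int) set" where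
  "F3vecs v = {x. (\<forall>i. x i \<in> {0,1,2}) \<and> (\<forall>i\<ge>v. x i = 0)}"

definition F3smult :: "int \<Rightarrow> (nat \<Rightarrow> int) \<Rightarrow> (nat \<Rightarrow> int)" where
  "F3smult c x = (\<lambda>i. (c * x i) mod 3)"

definition F3span1 :: "(nat \<Rightarrow> int) \<Rightarrow> (nat \<Rightarrow> int) set" where
  "F3span1 x = {F3smult c x | c. c \<in> {0,1,2}}"

definition PG_points :: "nat \<Rightarrow> (nat \<Rightarrow> int) set set" where
  "PG_points v = {F3span1 x | x. x \<in> F3vecs v \<and> x \<noteq> (\<lambda>_. 0)}"

definition PG_hyperplanes :: "nat \<Rightarrow> (nat \<Rightarrow> int) set set" where
  "PG_hyperplanes v = {{x \<in> F3vecs v. (\<Sum>i<v. a i * x i) mod 3 = 0} | a.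
      a \<in> F3vecs v \<and> a \<noteq> (\<lambda>_. 0)}"

definition divisible_pts :: "nat \<Rightarrow> nat \<Rightarrow> (nat \<Rightarrow> int) set set \<Rightarrow> bool" where
  "divisible_pts \<Delta> v C \<longleftrightarrow> (\<exists>u::int. \<forall>H \<in> PG_hyperplanes v.
      int (card {P \<in> C. P \<subseteq> H}) mod int \<Delta> = u mod int \<Delta>)"

end

(* For a linear form a on F_3^v let w(a) be the number of points of C outside the hyperplane
   a.x = 0.  A point lies outside for 2/3 of all forms and two distinct points both lie outside
   for 4/9 of them, so 3 sum w = 2 n 3^v and 9 sum w^2 = n (4 n + 2) 3^v.  Divisibility makes
   w(a) constant mod 3 on the 3^v - 1 nonzero forms; since w(0) = 0 and 3 divides sum w when
   v >= 2, the constant is 0.  If n <= 5 then w takes only the values 0 and 3, so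
   sum w^2 = 3 sum w, which forces n = 4; if n is 6 or 7 then w takes values in {0, 3, 6} and
   sum (w - 3)(w - 6) >= 0 contradicts the moments.

   Conversely, let R be normalised representatives of C whose Gram matrix sum_{x in R} x x^T
   vanishes mod 3.  The number of points outside a.x = 0 is congruent to
   sum_{x in R} (a.x)^2 = 0 mod 3, so C is 3-divisible.  Such sets are closed under direct sums,
   and the line (4 points), the affine plane (9), the elliptic quadric of PG(3,3) (10) and the
   ternary Golay code (11) give all sizes 4q + 4, 4q + 9, 4q + 10 and 4q + 11. *)

theory Submission
  imports Defs "HOL-Library.FuncSet"
begin

definition dot :: "nat \<Rightarrow> (nat \<Rightarrow> int) \<Rightarrow> (nat \<Rightarrow> int) \<Rightarrow> int" where
  "dot v a x = (\<Sum>i<v. a i * x i)"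

definition hyperplane :: "nat \<Rightarrow> (nat \<Rightarrow> int) \<Rightarrow> (nat \<Rightarrow> int) set" where
  "hyperplane v a = {x \<in> F3vecs v. dot v a x mod 3 = 0}"

lemma F3vecs_entry: "x \<in> F3vecs v \<Longrightarrow> x i \<in> {0,1,2}"
  by (simp add: F3vecs_def)

lemma F3vecs_eq_zero: "x \<in> F3vecs v \<Longrightarrow> v \<le> i \<Longrightarrow> x i = 0"
  by (simp add: F3vecs_def)

lemma zero_in_F3vecs: "(\<lambda>_. 0) \<in> F3vecs v"
  by (simp add: F3vecs_def)

lemma mod3_cases: "(t::int) mod 3 \<in> {0,1,2}"
proof -
  have "0 \<le> t mod 3" "t mod 3 < 3" by simp_all
  then show ?thesis by auto
qed

lemma mod3_in_F3vecs: "(\<And>i. v \<le> i \<Longrightarrow> f i = 0) \<Longrightarrow> (\<lambda>i. f i mod 3) \<in> F3vecs v"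
  using mod3_cases by (simp add: F3vecs_def)

lemma mod3_self: "(t::int) \<in> {0,1,2} \<Longrightarrow> t mod 3 = t"
  by auto

lemma F3vecs_ext:
  assumes "x \<in> F3vecs v" "y \<in> F3vecs v" "\<And>i. x i mod 3 = y i mod 3"
  shows "x = y"
proof
  fix i
  show "x i = y i"
    using assms(3)[of i] mod3_self[OF F3vecs_entry[OF assms(1)]] mod3_self[OF F3vecs_entry[OF assms(2)]]
    by simp
qed

lemma F3vecs_mono: "v \<le> w \<Longrightarrow> F3vecs v \<subseteq> F3vecs w"
  unfolding F3vecs_def by auto

lemma bij_betw_restrict_F3vecs:
  "bij_betw (\<lambda>x. restrict x {..<v}) (F3vecs v) (Pi\<^sub>E {..<v} (\<lambda>_. {0,1,2}))"
proof (rule bij_betw_byWitness[where f' = "\<lambda>g i. if i < v then g i else 0"])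
  show "\<forall>x\<in>F3vecs v. (\<lambda>i. if i < v then restrict x {..<v} i else 0) = x"
    by (auto simp: F3vecs_def fun_eq_iff)
  show "\<forall>g\<in>Pi\<^sub>E {..<v} (\<lambda>_. {0,1,2}). restrict (\<lambda>i. if i < v then g i else (0::int)) {..<v} = g"
  proof
    fix g :: "nat \<Rightarrow> int" assume g: "g \<in> Pi\<^sub>E {..<v} (\<lambda>_. {0,1,2})"
    show "restrict (\<lambda>i. if i < v then g i else 0) {..<v} = g"
    proof
      fix i show "restrict (\<lambda>i. if i < v then g i else 0) {..<v} i = g i"
        using PiE_arb[OF g, of i] by simp
    qed
  qed
  show "(\<lambda>x. restrict x {..<v}) ` F3vecs v \<subseteq> Pi\<^sub>E {..<v} (\<lambda>_. {0,1,2})"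
    by (intro image_subsetI) (simp add: restrict_PiE_iff F3vecs_def)
  show "(\<lambda>g i. if i < v then g i else 0) ` Pi\<^sub>E {..<v} (\<lambda>_. {0,1,2}) \<subseteq> F3vecs v"
  proof (rule image_subsetI)
    fix g :: "nat \<Rightarrow> int" assume g: "g \<in> Pi\<^sub>E {..<v} (\<lambda>_. {0,1,2})"
    have "g i \<in> {0,1,2}" if "i < v" for i
      using PiE_mem[OF g] that by simp
    then show "(\<lambda>i. if i < v then g i else 0) \<in> F3vecs v"
      unfolding F3vecs_def by auto
  qed
qed

lemma card_F3vecs: "card (F3vecs v) = 3 ^ v"
proof -
  have "card (F3vecs v) = card (Pi\<^sub>E {..<v} (\<lambda>_. {0,1,2::int}))"
    by (rule bij_betw_same_card[OF bij_betw_restrict_F3vecs])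
  also have "\<dots> = (\<Prod>i<v. card {0,1,2::int})"
    by (simp only: card_PiE finite_lessThan)
  finally show ?thesis by (simp add: numeral_3_eq_3)
qed

lemma finite_F3vecs: "finite (F3vecs v)"
  using card_F3vecs by (metis card.infinite power_not_zero zero_neq_numeral)

lemma dot_add: "dot v a (\<lambda>i. x i + y i) = dot v a x + dot v a y"
  by (simp add: dot_def algebra_simps sum.distrib)

lemma dot_diff: "dot v a (\<lambda>i. x i - y i) = dot v a x - dot v a y"
  by (simp add: dot_def algebra_simps sum_subtractf)

lemma dot_scale: "dot v a (\<lambda>i. c * x i) = c * dot v a x"
  by (simp add: dot_def algebra_simps sum_distrib_left)

lemma dot_mod_cong:
  assumes "\<And>i. x i mod 3 = y i mod 3"
  shows "dot v a x mod 3 = dot v a y mod 3"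
proof -
  have pointwise: "a i * x i mod 3 = a i * y i mod 3" for i
  proof -
    have "a i * x i mod 3 = a i * (x i mod 3) mod 3" by (simp add: mod_mult_right_eq)
    also have "\<dots> = a i * (y i mod 3) mod 3" by (simp only: assms)
    also have "\<dots> = a i * y i mod 3" by (simp add: mod_mult_right_eq)
    finally show ?thesis .
  qed
  have "dot v a x mod 3 = (\<Sum>i<v. a i * x i mod 3) mod 3"
    unfolding dot_def by (simp only: mod_sum_eq)
  also have "\<dots> = (\<Sum>i<v. a i * y i mod 3) mod 3"
    by (simp only: pointwise)
  also have "\<dots> = dot v a y mod 3"
    unfolding dot_def by (simp only: mod_sum_eq)
  finally show ?thesis .
qed

lemma dot_update:
  assumes "j < v"
  shows "dot v (a(j := t)) x = dot v a x + (t - a j) * x j"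
proof -
  have "dot v (a(j := t)) x = (\<Sum>i<v. a i * x i + (if i = j then (t - a j) * x j else 0))"
    unfolding dot_def by (rule sum.cong) (auto simp: algebra_simps)
  also have "\<dots> = dot v a x + (t - a j) * x j"
    using assms by (simp add: sum.distrib dot_def)
  finally show ?thesis .
qed

definition nonzero_forms :: "nat \<Rightarrow> (nat \<Rightarrow> int) \<Rightarrow> (nat \<Rightarrow> int) set" where
  "nonzero_forms v x = {a \<in> F3vecs v. dot v a x mod 3 \<noteq> 0}"

lemma nonzero_entry:
  assumes "x \<in> F3vecs v" "x \<noteq> (\<lambda>_. 0)"
  obtains j where "j < v" "x j \<in> {1,2}"
proof -
  obtain j where j: "x j \<noteq> 0" using assms(2) by auto
  then have "j < v" using F3vecs_eq_zero[OF assms(1)] not_le by blast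
  with j F3vecs_entry[OF assms(1), of j] show ?thesis using that by auto
qed

lemma card_dot_level_le:
  assumes x: "x \<in> F3vecs v" and j: "j < v"
  shows "card {a \<in> F3vecs v. dot v a x mod 3 = r}
    \<le> card {a \<in> F3vecs v. dot v a x mod 3 = (r + x j) mod 3}"
proof -
  define \<phi> where "\<phi> a = a(j := (a j + 1) mod 3)" for a :: "nat \<Rightarrow> int"
  have \<phi>_F3vecs: "\<phi> a \<in> F3vecs v" if "a \<in> F3vecs v" for a
    using that j mod3_cases unfolding F3vecs_def \<phi>_def by auto
  have "inj_on \<phi> (F3vecs v)"
  proof (rule inj_onI)
    fix a b assume a: "a \<in> F3vecs v" and b: "b \<in> F3vecs v" and ab: "\<phi> a = \<phi> b"
    have "(a j + 1) mod 3 = (b j + 1) mod 3"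
      using fun_cong[OF ab, of j] by (simp add: \<phi>_def)
    then have "a j mod 3 = b j mod 3"
      by (metis add_diff_cancel_right' mod_diff_left_eq)
    then have "a j = b j"
      using mod3_self[OF F3vecs_entry[OF a]] mod3_self[OF F3vecs_entry[OF b]] by simp
    then show "a = b"
      using ab by (metis \<phi>_def fun_upd_triv fun_upd_upd)
  qed
  moreover have "dot v (\<phi> a) x mod 3 = (dot v a x + x j) mod 3" for a
  proof -
    define d where "d = (a j + 1) mod 3 - a j"
    have "d mod 3 = 1"
      unfolding d_def by (simp add: mod_diff_left_eq)
    have "dot v (\<phi> a) x mod 3 = (dot v a x + d * x j) mod 3"
      unfolding \<phi>_def d_def by (simp add: dot_update[OF j])
    also have "\<dots> = (dot v a x + (d mod 3) * x j mod 3) mod 3"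
      by (simp add: mod_add_right_eq mod_mult_left_eq)
    also have "\<dots> = (dot v a x + x j) mod 3"
      by (simp add: \<open>d mod 3 = 1\<close> mod_add_right_eq)
    finally show ?thesis .
  qed
  then have "\<phi> ` {a \<in> F3vecs v. dot v a x mod 3 = r}
      \<subseteq> {a \<in> F3vecs v. dot v a x mod 3 = (r + x j) mod 3}"
    using \<phi>_F3vecs by (auto simp: mod_add_left_eq)
  ultimately show ?thesis
    by (intro card_inj_on_le[OF inj_on_subset]) (auto simp: finite_F3vecs)
qed

lemma card_dot_levels_eq:
  assumes x: "x \<in> F3vecs v" "x \<noteq> (\<lambda>_. 0)"
  defines "L r \<equiv> card {a \<in> F3vecs v. dot v a x mod 3 = r}"
  shows "L 0 = L 1 \<and> L 1 = L 2"
proof -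
  obtain j where j: "j < v" "x j \<in> {1,2}"
    using nonzero_entry[OF x] by blast
  have le: "L r \<le> L ((r + x j) mod 3)" for r
    unfolding L_def by (rule card_dot_level_le[OF x(1) j(1)])
  show ?thesis
  proof (cases "x j = 1")
    case True
    then show ?thesis using le[of 0] le[of 1] le[of 2] by simp
  next
    case False
    then have "x j = 2" using j(2) by simp
    then show ?thesis using le[of 0] le[of 1] le[of 2] by simp
  qed
qed

lemma card_nonzero_forms:
  assumes "x \<in> F3vecs v" "x \<noteq> (\<lambda>_. 0)"
  shows "3 * card (nonzero_forms v x) = 2 * 3 ^ v"
proof -
  define L where "L r = {a \<in> F3vecs v. dot v a x mod 3 = r}" for r
  have fin: "finite (L r)" for r
    unfolding L_def by (simp add: finite_F3vecs)
  have split: "F3vecs v = L 0 \<union> (L 1 \<union> L 2)" "nonzero_forms v x = L 1 \<union> L 2"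
    using mod3_cases by (auto simp: L_def nonzero_forms_def)
  have disj: "L 1 \<inter> L 2 = {}" "L 0 \<inter> (L 1 \<union> L 2) = {}"
    by (auto simp: L_def)
  have "card (nonzero_forms v x) = card (L 1) + card (L 2)"
    unfolding split by (rule card_Un_disjoint[OF fin fin disj(1)])
  moreover have "3 ^ v = card (L 0) + (card (L 1) + card (L 2))"
    unfolding card_F3vecs[symmetric] split card_Un_disjoint[OF fin fin disj(1), symmetric]
    by (rule card_Un_disjoint) (use fin disj in auto)
  moreover have "card (L 0) = card (L 1)" "card (L 1) = card (L 2)"
    using card_dot_levels_eq[OF assms] unfolding L_def by auto
  ultimately show ?thesis by simp
qed

lemma sum_indicator_nonzero_forms:
  assumes "x \<in> F3vecs v" "x \<noteq> (\<lambda>_. 0)"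
  shows "3 * (\<Sum>a\<in>F3vecs v. of_bool (dot v a x mod 3 \<noteq> 0)) = (2 * 3 ^ v :: int)"
proof -
  have "int (3 * card (nonzero_forms v x)) = int (2 * 3 ^ v)"
    using card_nonzero_forms[OF assms] by (rule arg_cong)
  then show ?thesis
    by (simp add: sum_of_bool_eq finite_F3vecs nonzero_forms_def Int_def)
qed

lemma nonzero_mod3_indicator_identity:
  fixes p q :: int
  shows "3 * (of_bool (p mod 3 \<noteq> 0) * of_bool (q mod 3 \<noteq> 0))
    = 2 * of_bool (p mod 3 \<noteq> 0) + 2 * of_bool (q mod 3 \<noteq> 0)
      - of_bool ((p + q) mod 3 \<noteq> 0) - (of_bool ((p - q) mod 3 \<noteq> 0) :: int)"
proof -
  have residues: "3 * (of_bool (r mod 3 \<noteq> 0) * of_bool (s mod 3 \<noteq> 0))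
    = 2 * of_bool (r mod 3 \<noteq> 0) + 2 * of_bool (s mod 3 \<noteq> 0)
      - of_bool ((r + s) mod 3 \<noteq> 0) - (of_bool ((r - s) mod 3 \<noteq> 0) :: int)"
    if "r \<in> {0,1,2}" "s \<in> {0,1,2}" for r s :: int
    using that by auto
  show ?thesis
    using residues[OF mod3_cases mod3_cases, of p q] by (simp add: mod_add_eq mod_diff_eq)
qed

lemma card_nonzero_forms_Int:
  assumes x: "x \<in> F3vecs v" "x \<noteq> (\<lambda>_. 0)" and y: "y \<in> F3vecs v" "y \<noteq> (\<lambda>_. 0)"
    and sum_nz: "(\<lambda>i. (x i + y i) mod 3) \<noteq> (\<lambda>_. 0)"
    and diff_nz: "(\<lambda>i. (x i - y i) mod 3) \<noteq> (\<lambda>_. 0)"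
  shows "9 * card (nonzero_forms v x \<inter> nonzero_forms v y) = 4 * 3 ^ v"
proof -
  define p where "p = (\<lambda>i. (x i + y i) mod 3)"
  define m where "m = (\<lambda>i. (x i - y i) mod 3)"
  define \<chi> :: "(nat \<Rightarrow> int) \<Rightarrow> (nat \<Rightarrow> int) \<Rightarrow> int"
    where "\<chi> z a = of_bool (dot v a z mod 3 \<noteq> 0)" for z a
  have p: "p \<in> F3vecs v" "p \<noteq> (\<lambda>_. 0)" and m: "m \<in> F3vecs v" "m \<noteq> (\<lambda>_. 0)"
    unfolding p_def m_def using sum_nz diff_nz
    by (auto intro: mod3_in_F3vecs simp: F3vecs_eq_zero[OF x(1)] F3vecs_eq_zero[OF y(1)])
  have sum_\<chi>: "3 * (\<Sum>a\<in>F3vecs v. \<chi> z a) = 2 * 3 ^ v" if "z \<in> F3vecs v" "z \<noteq> (\<lambda>_. 0)" for z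
    unfolding \<chi>_def by (rule sum_indicator_nonzero_forms[OF that])
  have pointwise: "3 * (\<chi> x a * \<chi> y a) = 2 * \<chi> x a + 2 * \<chi> y a - \<chi> p a - \<chi> m a" for a
  proof -
    have "dot v a p mod 3 = (dot v a x + dot v a y) mod 3"
      using dot_mod_cong[of p "\<lambda>i. x i + y i"] by (simp add: p_def dot_add)
    moreover have "dot v a m mod 3 = (dot v a x - dot v a y) mod 3"
      using dot_mod_cong[of m "\<lambda>i. x i - y i"] by (simp add: m_def dot_diff)
    ultimately show ?thesis
      unfolding \<chi>_def by (simp only: nonzero_mod3_indicator_identity)
  qed
  have "3 * (\<Sum>a\<in>F3vecs v. \<chi> x a * \<chi> y a)
      = (\<Sum>a\<in>F3vecs v. 2 * \<chi> x a + 2 * \<chi> y a - \<chi> p a - \<chi> m a)"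
    by (simp add: sum_distrib_left pointwise)
  also have "\<dots> = 2 * (\<Sum>a\<in>F3vecs v. \<chi> x a) + 2 * (\<Sum>a\<in>F3vecs v. \<chi> y a)
      - (\<Sum>a\<in>F3vecs v. \<chi> p a) - (\<Sum>a\<in>F3vecs v. \<chi> m a)"
    by (simp add: sum.distrib sum_subtractf sum_distrib_left)
  finally have "9 * (\<Sum>a\<in>F3vecs v. \<chi> x a * \<chi> y a) = 4 * 3 ^ v"
    using sum_\<chi>[OF x] sum_\<chi>[OF y] sum_\<chi>[OF p] sum_\<chi>[OF m] by linarith
  moreover have "nonzero_forms v x \<inter> nonzero_forms v y
      = F3vecs v \<inter> {a. dot v a x mod 3 \<noteq> 0 \<and> dot v a y mod 3 \<noteq> 0}"
    by (auto simp: nonzero_forms_def)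
  ultimately have "int (9 * card (nonzero_forms v x \<inter> nonzero_forms v y)) = int (4 * 3 ^ v)"
    by (simp add: \<chi>_def sum_of_bool_eq finite_F3vecs flip: of_bool_conj)
  then show ?thesis by (simp only: of_nat_eq_iff)
qed

lemma F3smult_cong:
  assumes "c mod 3 = d mod 3"
  shows "F3smult c x = F3smult d x"
proof
  fix i
  have "c * x i mod 3 = c mod 3 * x i mod 3" by (simp add: mod_mult_left_eq)
  also have "\<dots> = d * x i mod 3" by (simp add: assms mod_mult_left_eq)
  finally show "F3smult c x i = F3smult d x i" by (simp add: F3smult_def)
qed

lemma F3smult_F3smult: "F3smult c (F3smult d x) = F3smult (c * d) x"
  unfolding F3smult_def by (simp add: mod_mult_right_eq mult.assoc)

lemma F3smult_in_F3vecs: "x \<in> F3vecs v \<Longrightarrow> F3smult c x \<in> F3vecs v"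
  unfolding F3smult_def by (rule mod3_in_F3vecs) (simp add: F3vecs_eq_zero)

lemma F3smult_one: "x \<in> F3vecs v \<Longrightarrow> F3smult 1 x = x"
  unfolding F3smult_def using mod3_self[OF F3vecs_entry] by simp

lemma mem_F3span1:
  assumes "x \<in> F3vecs v"
  shows "x \<in> F3span1 x"
proof -
  have "x = F3smult 1 x \<and> (1::int) \<in> {0,1,2}"
    using F3smult_one[OF assms] by simp
  then show ?thesis unfolding F3span1_def by blast
qed

lemma F3span1_F3smult_two: "F3span1 (F3smult 2 x) = F3span1 x"
proof -
  have twice: "F3smult c (F3smult 2 x) = F3smult ((2 * c) mod 3) x" for c
    unfolding F3smult_F3smult by (rule F3smult_cong) (simp add: mult.commute)
  have halve: "F3smult c x = F3smult ((2 * c) mod 3) (F3smult 2 x)" for c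
  proof -
    have "2 * c * 2 = c + c * 3" by simp
    then have "(2 * c) mod 3 * 2 mod 3 = (c + c * 3) mod 3"
      by (simp only: mod_mult_left_eq)
    also have "\<dots> = c mod 3" by (rule mod_mult_self1)
    finally show ?thesis
      unfolding F3smult_F3smult by (intro F3smult_cong) simp
  qed
  show ?thesis
  proof (intro equalityI subsetI)
    fix z assume "z \<in> F3span1 (F3smult 2 x)"
    then obtain c where "z = F3smult c (F3smult 2 x)" unfolding F3span1_def by blast
    then show "z \<in> F3span1 x" unfolding F3span1_def twice using mod3_cases by blast
  next
    fix z assume "z \<in> F3span1 x"
    then obtain c where "z = F3smult c x" unfolding F3span1_def by blast
    then show "z \<in> F3span1 (F3smult 2 x)" unfolding F3span1_def halve[of c] using mod3_cases by blast
  qed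
qed

lemma F3span1_eq_iff:
  assumes x: "x \<in> F3vecs v" and y: "y \<in> F3vecs v" "y \<noteq> (\<lambda>_. 0)"
  shows "F3span1 x = F3span1 y \<longleftrightarrow> y = x \<or> y = F3smult 2 x"
proof
  assume "F3span1 x = F3span1 y"
  then obtain c where c: "c \<in> {0,1,2}" "y = F3smult c x"
    using mem_F3span1[OF y(1)] unfolding F3span1_def by auto
  have "c \<noteq> 0" using c(2) y(2) by (auto simp: F3smult_def)
  then show "y = x \<or> y = F3smult 2 x"
    using c F3smult_one[OF x] by auto
next
  assume "y = x \<or> y = F3smult 2 x"
  then show "F3span1 x = F3span1 y"
    using F3span1_F3smult_two by auto
qed

lemma F3span1_subset_hyperplane_iff:
  assumes x: "x \<in> F3vecs v"
  shows "F3span1 x \<subseteq> hyperplane v a \<longleftrightarrow> dot v a x mod 3 = 0"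
proof
  assume "F3span1 x \<subseteq> hyperplane v a"
  then show "dot v a x mod 3 = 0"
    using mem_F3span1[OF x] by (auto simp: hyperplane_def)
next
  assume dot0: "dot v a x mod 3 = 0"
  have "dot v a (F3smult c x) mod 3 = 0" for c
  proof -
    have "dot v a (F3smult c x) mod 3 = c * dot v a x mod 3"
      using dot_mod_cong[of "F3smult c x" "\<lambda>i. c * x i"] by (simp add: F3smult_def dot_scale)
    also have "\<dots> = 0"
      using dot0 by (simp add: mod_mult_right_eq[symmetric])
    finally show ?thesis .
  qed
  then show "F3span1 x \<subseteq> hyperplane v a"
    using F3smult_in_F3vecs[OF x] by (auto simp: F3span1_def hyperplane_def)
qed

lemma forms_missing_F3span1:
  "x \<in> F3vecs v \<Longrightarrow> {a \<in> F3vecs v. \<not> F3span1 x \<subseteq> hyperplane v a} = nonzero_forms v x"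
  by (auto simp: nonzero_forms_def F3span1_subset_hyperplane_iff)

lemma card_forms_missing_point:
  assumes "P \<in> PG_points v"
  shows "3 * card {a \<in> F3vecs v. \<not> P \<subseteq> hyperplane v a} = 2 * 3 ^ v"
proof -
  obtain x where "x \<in> F3vecs v" "x \<noteq> (\<lambda>_. 0)" "P = F3span1 x"
    using assms unfolding PG_points_def by blast
  then show ?thesis using card_nonzero_forms forms_missing_F3span1 by simp
qed

lemma sum_diff_nonzero_if_F3span1_ne:
  assumes x: "x \<in> F3vecs v" and y: "y \<in> F3vecs v" "y \<noteq> (\<lambda>_. 0)"
    and ne: "F3span1 x \<noteq> F3span1 y"
  shows "(\<lambda>i. (x i + y i) mod 3) \<noteq> (\<lambda>_. 0)" and "(\<lambda>i. (x i - y i) mod 3) \<noteq> (\<lambda>_. 0)"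
proof
  assume "(\<lambda>i. (x i + y i) mod 3) = (\<lambda>_. 0)"
  then have "3 dvd x i + y i" for i
    by (simp add: dvd_eq_mod_eq_0 fun_eq_iff)
  then have "3 dvd (x i + y i) - 3 * x i" for i
    by (intro dvd_diff) simp_all
  then have "y i mod 3 = F3smult 2 x i mod 3" for i
    by (simp add: F3smult_def mod_eq_dvd_iff algebra_simps)
  then have "y = F3smult 2 x"
    by (rule F3vecs_ext[OF y(1) F3smult_in_F3vecs[OF x]])
  then show False
    using F3span1_eq_iff[OF x y] ne by simp
next
  show "(\<lambda>i. (x i - y i) mod 3) \<noteq> (\<lambda>_. 0)"
  proof
    assume "(\<lambda>i. (x i - y i) mod 3) = (\<lambda>_. 0)"
    then have "x i mod 3 = y i mod 3" for i
      by (simp add: fun_eq_iff mod_eq_dvd_iff dvd_eq_mod_eq_0)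
    then have "x = y"
      by (rule F3vecs_ext[OF x y(1)])
    then show False using ne by simp
  qed
qed

lemma card_forms_missing_two_points:
  assumes P: "P \<in> PG_points v" and Q: "Q \<in> PG_points v" and "P \<noteq> Q"
  shows "9 * card {a \<in> F3vecs v. \<not> P \<subseteq> hyperplane v a \<and> \<not> Q \<subseteq> hyperplane v a} = 4 * 3 ^ v"
proof -
  obtain x where x: "x \<in> F3vecs v" "x \<noteq> (\<lambda>_. 0)" "P = F3span1 x"
    using P unfolding PG_points_def by auto
  obtain y where y: "y \<in> F3vecs v" "y \<noteq> (\<lambda>_. 0)" "Q = F3span1 y"
    using Q unfolding PG_points_def by auto
  have "{a \<in> F3vecs v. \<not> P \<subseteq> hyperplane v a \<and> \<not> Q \<subseteq> hyperplane v a}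
      = nonzero_forms v x \<inter> nonzero_forms v y"
    using forms_missing_F3span1[OF x(1)] forms_missing_F3span1[OF y(1)] x(3) y(3) by auto
  then show ?thesis
    using card_nonzero_forms_Int[OF x(1,2) y(1,2) sum_diff_nonzero_if_F3span1_ne[OF x(1) y(1,2)]]
      x(3) y(3) \<open>P \<noteq> Q\<close> by simp
qed

section \<open>The moment argument\<close>

lemma card_filter_eq_sum: "finite A \<Longrightarrow> card {a \<in> A. P a} = (\<Sum>a\<in>A. of_bool (P a))"
  by (simp add: sum_of_bool_eq Int_def)

lemma sum_card_filter_swap:
  assumes "finite A" "finite B"
  shows "(\<Sum>a\<in>A. card {b \<in> B. R a b}) = (\<Sum>b\<in>B. card {a \<in> A. R a b})"
proof -
  have "(\<Sum>a\<in>A. card {b \<in> B. R a b}) = (\<Sum>a\<in>A. \<Sum>b\<in>B. of_bool (R a b))"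
    using assms(2) by (simp only: card_filter_eq_sum)
  also have "\<dots> = (\<Sum>b\<in>B. \<Sum>a\<in>A. of_bool (R a b))"
    by (rule sum.swap)
  also have "\<dots> = (\<Sum>b\<in>B. card {a \<in> A. R a b})"
    using assms(1) by (simp only: card_filter_eq_sum)
  finally show ?thesis .
qed

lemma sum_card_filter_squared:
  assumes "finite A" "finite B"
  shows "(\<Sum>a\<in>A. card {b \<in> B. R a b} ^ 2) = (\<Sum>b\<in>B. \<Sum>b'\<in>B. card {a \<in> A. R a b \<and> R a b'})"
proof -
  have "(\<Sum>a\<in>A. card {b \<in> B. R a b} ^ 2)
      = (\<Sum>a\<in>A. \<Sum>b\<in>B. \<Sum>b'\<in>B. of_bool (R a b \<and> R a b'))"
    using assms(2)
    by (simp only: card_filter_eq_sum power2_eq_square sum_product of_bool_conj[symmetric])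
  also have "\<dots> = (\<Sum>b\<in>B. \<Sum>a\<in>A. \<Sum>b'\<in>B. of_bool (R a b \<and> R a b'))"
    by (rule sum.swap)
  also have "\<dots> = (\<Sum>b\<in>B. \<Sum>b'\<in>B. \<Sum>a\<in>A. of_bool (R a b \<and> R a b'))"
    by (rule sum.cong[OF refl], rule sum.swap)
  also have "\<dots> = (\<Sum>b\<in>B. \<Sum>b'\<in>B. card {a \<in> A. R a b \<and> R a b'})"
    using assms(1) by (simp only: card_filter_eq_sum)
  finally show ?thesis .
qed

lemma sum_sum_diagonal_const:
  assumes "finite B" "\<And>b. b \<in> B \<Longrightarrow> f b b = d"
    and "\<And>b b'. b \<in> B \<Longrightarrow> b' \<in> B \<Longrightarrow> b \<noteq> b' \<Longrightarrow> f b b' = e"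
  shows "(\<Sum>b\<in>B. \<Sum>b'\<in>B. f b b') = card B * (d + (card B - 1) * (e :: nat))"
proof -
  have "(\<Sum>b'\<in>B. f b b') = d + (card B - 1) * e" if "b \<in> B" for b
  proof -
    have "(\<Sum>b'\<in>B. f b b') = f b b + (\<Sum>b'\<in>B - {b}. f b b')"
      using assms(1) that by (rule sum.remove)
    also have "(\<Sum>b'\<in>B - {b}. f b b') = (\<Sum>b'\<in>B - {b}. e)"
      using assms(3) that by (intro sum.cong) auto
    finally show ?thesis
      using assms(1,2) that by simp
  qed
  then show ?thesis by simp
qed

definition missing_count :: "nat \<Rightarrow> (nat \<Rightarrow> int) set set \<Rightarrow> (nat \<Rightarrow> int) \<Rightarrow> nat" where
  "missing_count v C a = card {P \<in> C. \<not> P \<subseteq> hyperplane v a}"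

lemma finite_PG_points: "finite (PG_points v)"
proof -
  have "PG_points v \<subseteq> F3span1 ` F3vecs v"
    unfolding PG_points_def by auto
  then show ?thesis
    using finite_F3vecs finite_subset by blast
qed

lemma sum_missing_count:
  assumes "C \<subseteq> PG_points v"
  shows "3 * (\<Sum>a\<in>F3vecs v. missing_count v C a) = 2 * card C * 3 ^ v"
proof -
  have "finite C" using assms finite_PG_points finite_subset by blast
  then have "(\<Sum>a\<in>F3vecs v. missing_count v C a)
      = (\<Sum>P\<in>C. card {a \<in> F3vecs v. \<not> P \<subseteq> hyperplane v a})"
    unfolding missing_count_def by (intro sum_card_filter_swap finite_F3vecs)
  then show ?thesis
    using card_forms_missing_point assms by (simp add: sum_distrib_left subset_iff)
qed

lemma sum_missing_count_squared:
  assumes "C \<subseteq> PG_points v"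
  shows "9 * (\<Sum>a\<in>F3vecs v. missing_count v C a ^ 2) = card C * (4 * card C + 2) * 3 ^ v"
proof -
  have fin: "finite C" using assms finite_PG_points finite_subset by blast
  define f where
    "f P Q = 9 * card {a \<in> F3vecs v. \<not> P \<subseteq> hyperplane v a \<and> \<not> Q \<subseteq> hyperplane v a}"
    for P Q
  have "9 * (\<Sum>a\<in>F3vecs v. missing_count v C a ^ 2) = (\<Sum>P\<in>C. \<Sum>Q\<in>C. f P Q)"
    unfolding missing_count_def f_def
    by (simp add: sum_card_filter_squared[OF finite_F3vecs fin] sum_distrib_left)
  also have "\<dots> = card C * (6 * 3 ^ v + (card C - 1) * (4 * 3 ^ v))"
  proof (rule sum_sum_diagonal_const[OF fin])
    show "f P P = 6 * 3 ^ v" if "P \<in> C" for P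
      using card_forms_missing_point[of P v] that assms by (auto simp: f_def)
    show "f P Q = 4 * 3 ^ v" if "P \<in> C" "Q \<in> C" "P \<noteq> Q" for P Q
      using card_forms_missing_two_points[of P v Q] that assms by (auto simp: f_def)
  qed
  also have "\<dots> = card C * (4 * card C + 2) * 3 ^ v"
    by (cases "card C") (simp_all add: algebra_simps)
  finally show ?thesis .
qed

lemma three_dvd_common_residue:
  fixes f :: "'a \<Rightarrow> int"
  assumes fin: "finite V" and z: "z \<in> V" "f z = 0"
    and "3 dvd card V" "3 dvd sum f V"
    and residue: "\<And>a. a \<in> V - {z} \<Longrightarrow> f a mod 3 = r mod 3"
  shows "3 dvd r"
proof -
  have "sum f V = sum f (V - {z})"
    using sum.remove[OF fin z(1), of f] z(2) by simp
  then have "sum f V mod 3 = (\<Sum>a\<in>V - {z}. f a mod 3) mod 3"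
    by (simp add: mod_sum_eq)
  also have "\<dots> = (\<Sum>a\<in>V - {z}. r mod 3) mod 3"
    using residue by simp
  also have "\<dots> = int (card (V - {z})) * (r mod 3) mod 3"
    by simp
  also have "\<dots> = (int (card V) - 1) * r mod 3"
  proof -
    have "0 < card V" using fin z(1) card_gt_0_iff by blast
    then have "int (card (V - {z})) = int (card V) - 1"
      using z(1) by (simp add: of_nat_diff)
    then show ?thesis by (simp only: mod_mult_right_eq)
  qed
  finally have "3 dvd (int (card V) - 1) * r"
    using \<open>3 dvd sum f V\<close> by (simp add: dvd_eq_mod_eq_0)
  moreover have "int 3 dvd int (card V)"
    using \<open>3 dvd card V\<close> by (simp only: int_dvd_int_iff)
  then have "3 dvd int (card V) * r"
    by simp
  ultimately have "3 dvd int (card V) * r - (int (card V) - 1) * r"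
    by (rule dvd_diff[rotated])
  then show ?thesis by (simp add: algebra_simps)
qed

lemma hyperplane_in_PG_hyperplanes:
  "a \<in> F3vecs v \<Longrightarrow> a \<noteq> (\<lambda>_. 0) \<Longrightarrow> hyperplane v a \<in> PG_hyperplanes v"
  unfolding hyperplane_def PG_hyperplanes_def dot_def by blast

lemma missing_count_zero:
  assumes "C \<subseteq> PG_points v"
  shows "missing_count v C (\<lambda>_. 0) = 0"
proof -
  have "P \<subseteq> hyperplane v (\<lambda>_. 0)" if P: "P \<in> C" for P
  proof -
    obtain x where "x \<in> F3vecs v" "P = F3span1 x"
      using P assms unfolding PG_points_def by blast
    then show ?thesis by (simp add: F3span1_subset_hyperplane_iff dot_def)
  qed
  then have "{P \<in> C. \<not> P \<subseteq> hyperplane v (\<lambda>_. 0)} = {}" by blast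
  then show ?thesis unfolding missing_count_def by (simp only: card.empty)
qed

lemma missing_count_mod3:
  assumes C: "C \<subseteq> PG_points v" and H: "int (card {P \<in> C. P \<subseteq> H}) mod 3 = u mod 3"
    and "hyperplane v a = H"
  shows "int (missing_count v C a) mod 3 = (int (card C) - u) mod 3"
proof -
  have "finite C" using C finite_PG_points finite_subset by blast
  moreover have "C = {P \<in> C. \<not> P \<subseteq> H} \<union> {P \<in> C. P \<subseteq> H}" by blast
  ultimately have "card C = missing_count v C a + card {P \<in> C. P \<subseteq> H}"
    unfolding missing_count_def \<open>hyperplane v a = H\<close>
    by (metis (no_types, lifting) card_Un_disjoint disjoint_iff finite_Un mem_Collect_eq)
  then have "int (missing_count v C a) = int (card C) - int (card {P \<in> C. P \<subseteq> H})"
    by simp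
  then have "int (missing_count v C a) mod 3 = (int (card C) - int (card {P \<in> C. P \<subseteq> H}) mod 3) mod 3"
    by (simp add: mod_diff_right_eq)
  then show ?thesis
    using H by (simp add: mod_diff_right_eq)
qed

lemma three_dvd_sum_missing_count:
  assumes "2 \<le> v" "C \<subseteq> PG_points v"
  shows "3 dvd (\<Sum>a\<in>F3vecs v. int (missing_count v C a))"
proof -
  obtain k where v: "v = k + 2" using assms(1) le_Suc_ex by (metis add.commute)
  have "3 * (\<Sum>a\<in>F3vecs v. missing_count v C a) = 3 * (6 * card C * 3 ^ k)"
    using sum_missing_count[OF assms(2)] by (simp add: v power_add)
  then have "(\<Sum>a\<in>F3vecs v. missing_count v C a) = 3 * (2 * card C * 3 ^ k)"
    by simp
  then have "(\<Sum>a\<in>F3vecs v. int (missing_count v C a)) = 3 * int (2 * card C * 3 ^ k)"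
    by (simp flip: of_nat_sum)
  then show ?thesis by simp
qed

lemma three_dvd_missing_count:
  assumes v: "2 \<le> v" and C: "C \<subseteq> PG_points v" and div: "divisible_pts 3 v C"
    and a: "a \<in> F3vecs v"
  shows "3 dvd missing_count v C a"
proof -
  obtain u :: int
    where u: "\<And>H. H \<in> PG_hyperplanes v \<Longrightarrow> int (card {P \<in> C. P \<subseteq> H}) mod 3 = u mod 3"
    using div unfolding divisible_pts_def by auto
  have residue: "int (missing_count v C b) mod 3 = (int (card C) - u) mod 3"
    if "b \<in> F3vecs v - {\<lambda>_. 0}" for b
    using that by (intro missing_count_mod3[OF C u refl] hyperplane_in_PG_hyperplanes) auto
  have "3 dvd card (F3vecs v)"
    using v by (simp add: card_F3vecs)
  then have "3 dvd (int (card C) - u)"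
    using three_dvd_common_residue[OF finite_F3vecs zero_in_F3vecs _ _ three_dvd_sum_missing_count[OF v C] residue]
      missing_count_zero[OF C] by simp
  then have "int (missing_count v C a) mod 3 = 0"
    using residue[of a] a missing_count_zero[OF C] by (cases "a = (\<lambda>_. 0)") (auto simp: dvd_eq_mod_eq_0)
  then have "int 3 dvd int (missing_count v C a)"
    by (simp add: dvd_eq_mod_eq_0)
  then show ?thesis by (simp only: int_dvd_int_iff)
qed

lemma card_eq_four_or_ge_eight_if_moments:
  fixes w :: "'a \<Rightarrow> nat"
  assumes V: "finite V" "V \<noteq> {}" and "0 < n"
    and w: "\<And>a. a \<in> V \<Longrightarrow> w a \<le> n \<and> 3 dvd w a"
    and first: "3 * sum w V = 2 * n * card V"
    and second: "9 * (\<Sum>a\<in>V. w a ^ 2) = n * (4 * n + 2) * card V"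
  shows "n = 4 \<or> 8 \<le> n"
proof (rule ccontr)
  assume "\<not> (n = 4 \<or> 8 \<le> n)"
  then consider "n = 1 \<or> n = 2 \<or> n = 3 \<or> n = 5" | "n = 6 \<or> n = 7"
    using \<open>0 < n\<close> by arith
  moreover have "0 < card V" using V card_gt_0_iff by blast
  moreover have w_small: "w a \<in> {0,3,6}" if "a \<in> V" "n \<le> 7" for a
    using w[OF that(1)] that(2) by (elim conjE dvdE) auto
  ultimately show False
  proof cases
    case 1
    then have "w a ^ 2 = 3 * w a" if "a \<in> V" for a
      using w_small[OF that] w[OF that] by auto
    then have "(\<Sum>a\<in>V. w a ^ 2) = 3 * sum w V"
      by (simp add: sum_distrib_left)
    then show False
      using 1 first second \<open>0 < card V\<close> by auto
  next
    case 2
    then have "9 * w a \<le> w a ^ 2 + 18" if "a \<in> V" for a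
      using w_small[OF that] by auto
    then have "(\<Sum>a\<in>V. 9 * w a) \<le> (\<Sum>a\<in>V. w a ^ 2 + 18)"
      by (rule sum_mono)
    then have "9 * sum w V \<le> (\<Sum>a\<in>V. w a ^ 2) + 18 * card V"
      by (simp add: sum_distrib_left sum.distrib)
    then show False
      using 2 first second \<open>0 < card V\<close> by auto
  qed
qed

lemma card_three_divisible_point_set:
  assumes "2 \<le> v" "C \<subseteq> PG_points v" "C \<noteq> {}" "divisible_pts 3 v C"
  shows "card C = 4 \<or> 8 \<le> card C"
proof (rule card_eq_four_or_ge_eight_if_moments)
  show "finite (F3vecs v)" "F3vecs v \<noteq> {}"
    using finite_F3vecs zero_in_F3vecs by blast+
  show "0 < card C"
    using assms(2,3) finite_PG_points card_gt_0_iff finite_subset by blast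
  show "missing_count v C a \<le> card C \<and> 3 dvd missing_count v C a" if "a \<in> F3vecs v" for a
    using three_dvd_missing_count[OF assms(1,2,4) that] assms(2) finite_PG_points
    by (auto simp: missing_count_def intro: card_mono finite_subset)
  show "3 * (\<Sum>a\<in>F3vecs v. missing_count v C a) = 2 * card C * card (F3vecs v)"
    using sum_missing_count[OF assms(2)] by (simp add: card_F3vecs)
  show "9 * (\<Sum>a\<in>F3vecs v. missing_count v C a ^ 2) = card C * (4 * card C + 2) * card (F3vecs v)"
    using sum_missing_count_squared[OF assms(2)] by (simp add: card_F3vecs)
qed

section \<open>Self-orthogonal point sets\<close>

definition lead_one :: "(nat \<Rightarrow> int) \<Rightarrow> bool" where
  "lead_one x \<longleftrightarrow> (\<exists>j. x j = 1 \<and> (\<forall>i<j. x i = 0))"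

(* The coordinate functions restricted to R span a self-orthogonal ternary code; lead_one picks
   one representative per point. *)
definition self_orthogonal :: "nat \<Rightarrow> (nat \<Rightarrow> int) set \<Rightarrow> bool" where
  "self_orthogonal v R \<longleftrightarrow> finite R \<and> R \<subseteq> F3vecs v \<and> (\<forall>x\<in>R. lead_one x)
     \<and> (\<forall>j l. 3 dvd (\<Sum>x\<in>R. x j * x l))"

lemma lead_one_nonzero: "lead_one x \<Longrightarrow> x \<noteq> (\<lambda>_. 0)"
  unfolding lead_one_def by auto

lemma inj_on_F3span1:
  assumes R: "R \<subseteq> F3vecs v" "\<forall>x\<in>R. lead_one x"
  shows "inj_on F3span1 R"
proof (rule inj_onI)
  fix x y assume x: "x \<in> R" and y: "y \<in> R" and eq: "F3span1 x = F3span1 y"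
  have "y \<noteq> F3smult 2 x"
  proof
    assume y2: "y = F3smult 2 x"
    obtain j where j: "x j = 1" "\<forall>i<j. x i = 0" using R(2) x unfolding lead_one_def by blast
    obtain j' where j': "y j' = 1" "\<forall>i<j'. y i = 0" using R(2) y unfolding lead_one_def by blast
    have "y j = 2" "\<forall>i<j. y i = 0"
      using j by (simp_all add: y2 F3smult_def)
    then show False
      using j' by (cases j' j rule: linorder_cases) auto
  qed
  then show "x = y"
    using F3span1_eq_iff[of x v y] eq x y R lead_one_nonzero by blast
qed

lemma of_bool_nonzero_mod3: "(of_bool (t mod 3 \<noteq> 0) :: int) = t ^ 2 mod 3"
proof -
  have "t ^ 2 mod 3 = (t mod 3) ^ 2 mod 3" by (simp add: power_mod)
  then show ?thesis using mod3_cases[of t] by auto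
qed

lemma card_nonzero_mod3_eq_sum_squares:
  fixes f :: "'a \<Rightarrow> int"
  assumes "finite R"
  shows "int (card {x \<in> R. f x mod 3 \<noteq> 0}) mod 3 = (\<Sum>x\<in>R. f x ^ 2) mod 3"
proof -
  have "int (card {x \<in> R. f x mod 3 \<noteq> 0}) = (\<Sum>x\<in>R. of_bool (f x mod 3 \<noteq> 0))"
    using assms by (simp add: sum_of_bool_eq Int_def)
  also have "\<dots> = (\<Sum>x\<in>R. f x ^ 2 mod 3)"
    by (simp only: of_bool_nonzero_mod3)
  finally show ?thesis by (simp add: mod_sum_eq)
qed

lemma sum_dot_squared:
  "(\<Sum>x\<in>R. dot v a x ^ 2) = (\<Sum>j<v. \<Sum>l<v. a j * a l * (\<Sum>x\<in>R. x j * x l))"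
proof -
  have "(\<Sum>x\<in>R. dot v a x ^ 2) = (\<Sum>x\<in>R. \<Sum>j<v. \<Sum>l<v. (a j * x j) * (a l * x l))"
    unfolding dot_def by (simp add: power2_eq_square sum_product)
  also have "\<dots> = (\<Sum>j<v. \<Sum>x\<in>R. \<Sum>l<v. (a j * x j) * (a l * x l))"
    by (rule sum.swap)
  also have "\<dots> = (\<Sum>j<v. \<Sum>l<v. \<Sum>x\<in>R. (a j * x j) * (a l * x l))"
    by (rule sum.cong[OF refl]) (rule sum.swap)
  also have "\<dots> = (\<Sum>j<v. \<Sum>l<v. a j * a l * (\<Sum>x\<in>R. x j * x l))"
    by (simp add: sum_distrib_left algebra_simps)
  finally show ?thesis .
qed

lemma card_points_in_hyperplane:
  assumes RV: "R \<subseteq> F3vecs v" and inj: "inj_on F3span1 R"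
  shows "card {P \<in> F3span1 ` R. P \<subseteq> hyperplane v a} = card {x \<in> R. dot v a x mod 3 = 0}"
proof -
  define R0 where "R0 = {x \<in> R. dot v a x mod 3 = 0}"
  have in_H: "F3span1 x \<subseteq> hyperplane v a \<longleftrightarrow> x \<in> R0" if "x \<in> R" for x
    unfolding R0_def using F3span1_subset_hyperplane_iff[OF subsetD[OF RV that]] that by simp
  have "{P \<in> F3span1 ` R. P \<subseteq> hyperplane v a} = F3span1 ` R0"
  proof (intro equalityI subsetI)
    fix P assume "P \<in> {P \<in> F3span1 ` R. P \<subseteq> hyperplane v a}"
    then obtain x where "x \<in> R" "P = F3span1 x" "F3span1 x \<subseteq> hyperplane v a" by blast
    then show "P \<in> F3span1 ` R0" using in_H by blast
  next
    fix P assume "P \<in> F3span1 ` R0"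
    then obtain x where "x \<in> R0" "P = F3span1 x" by blast
    moreover have "x \<in> R" using \<open>x \<in> R0\<close> by (simp add: R0_def)
    ultimately show "P \<in> {P \<in> F3span1 ` R. P \<subseteq> hyperplane v a}" using in_H by blast
  qed
  then show ?thesis
    using card_image[OF inj_on_subset[OF inj]] by (simp add: R0_def)
qed

lemma three_dvd_card_nonzero_on_self_orthogonal:
  assumes "self_orthogonal v R"
  shows "3 dvd int (card {x \<in> R. dot v a x mod 3 \<noteq> 0})"
proof -
  have fin: "finite R" and gram: "\<And>j l. 3 dvd (\<Sum>x\<in>R. x j * x l)"
    using assms unfolding self_orthogonal_def by blast+
  have "3 dvd (\<Sum>x\<in>R. dot v a x ^ 2)"
    unfolding sum_dot_squared by (intro dvd_sum dvd_mult gram)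
  then show ?thesis
    unfolding dvd_eq_mod_eq_0 card_nonzero_mod3_eq_sum_squares[OF fin] .
qed

lemma self_orthogonal_points:
  assumes "self_orthogonal v R"
  shows "F3span1 ` R \<subseteq> PG_points v" "card (F3span1 ` R) = card R"
    and "divisible_pts 3 v (F3span1 ` R)"
proof -
  have fin: "finite R" and RV: "R \<subseteq> F3vecs v" and lead: "\<forall>x\<in>R. lead_one x"
    using assms unfolding self_orthogonal_def by blast+
  have inj: "inj_on F3span1 R" by (rule inj_on_F3span1[OF RV lead])
  show "F3span1 ` R \<subseteq> PG_points v"
    using RV lead lead_one_nonzero unfolding PG_points_def by blast
  show "card (F3span1 ` R) = card R"
    by (rule card_image[OF inj])
  show "divisible_pts 3 v (F3span1 ` R)"
    unfolding divisible_pts_def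
  proof (intro exI[of _ "int (card R)"] ballI)
    fix H assume "H \<in> PG_hyperplanes v"
    then obtain a where H: "H = hyperplane v a"
      unfolding PG_hyperplanes_def hyperplane_def dot_def by blast
    define R0 where "R0 = {x \<in> R. dot v a x mod 3 = 0}"
    define N where "N = {x \<in> R. dot v a x mod 3 \<noteq> 0}"
    have "R = R0 \<union> N" "R0 \<inter> N = {}" "finite R0" "finite N"
      using fin by (auto simp: R0_def N_def)
    then have "int (card R) mod 3 = (int (card R0) + int (card N) mod 3) mod 3"
      using card_Un_disjoint by (metis mod_add_right_eq of_nat_add)
    moreover have "int (card N) mod 3 = 0"
      using three_dvd_card_nonzero_on_self_orthogonal[OF assms] by (simp add: N_def)
    ultimately show "int (card {P \<in> F3span1 ` R. P \<subseteq> H}) mod int 3 = int (card R) mod int 3"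
      unfolding H card_points_in_hyperplane[OF RV inj] R0_def by simp
  qed
qed

definition shift_vec :: "nat \<Rightarrow> (nat \<Rightarrow> int) \<Rightarrow> nat \<Rightarrow> int" where
  "shift_vec s x i = (if s \<le> i then x (i - s) else 0)"

lemma shift_vec_in_F3vecs: "x \<in> F3vecs w \<Longrightarrow> shift_vec v x \<in> F3vecs (v + w)"
  unfolding F3vecs_def shift_vec_def by auto

lemma shift_vec_add [simp]: "shift_vec v x (v + i) = x i"
  by (simp add: shift_vec_def)

lemma lead_one_shift_vec:
  assumes "lead_one x"
  shows "lead_one (shift_vec v x)"
proof -
  obtain j where j: "x j = 1" "\<forall>i<j. x i = 0"
    using assms unfolding lead_one_def by blast
  have "\<forall>i<v + j. shift_vec v x i = 0"
    using j(2) by (auto simp: shift_vec_def)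
  then show ?thesis
    unfolding lead_one_def using j(1) by (intro exI[of _ "v + j"]) simp
qed

lemma inj_shift_vec: "inj (shift_vec v)"
proof (rule injI)
  fix x y assume "shift_vec v x = shift_vec v y"
  then have "shift_vec v x (v + i) = shift_vec v y (v + i)" for i by simp
  then show "x = y" by auto
qed

lemma self_orthogonal_juxtapose:
  assumes R: "self_orthogonal v R" and S: "self_orthogonal w S"
  shows "self_orthogonal (v + w) (R \<union> shift_vec v ` S)"
    and "card (R \<union> shift_vec v ` S) = card R + card S"
proof -
  have finR: "finite R" and RV: "R \<subseteq> F3vecs v" and leadR: "\<forall>x\<in>R. lead_one x"
    and gramR: "\<And>j l. 3 dvd (\<Sum>x\<in>R. x j * x l)"
    using R unfolding self_orthogonal_def by blast+
  have finS: "finite S" and SV: "S \<subseteq> F3vecs w" and leadS: "\<forall>x\<in>S. lead_one x"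
    and gramS: "\<And>j l. 3 dvd (\<Sum>x\<in>S. x j * x l)"
    using S unfolding self_orthogonal_def by blast+
  have inj: "inj_on (shift_vec v) S"
    using inj_shift_vec by (rule inj_on_subset) simp
  have disj: "R \<inter> shift_vec v ` S = {}"
  proof (intro equalityI subsetI)
    fix z assume "z \<in> R \<inter> shift_vec v ` S"
    then obtain y where y: "y \<in> S" "z = shift_vec v y" and "z \<in> R" by blast
    obtain j where "y j = 1" using leadS y(1) unfolding lead_one_def by blast
    moreover have "z (v + j) = 0"
      using F3vecs_eq_zero \<open>z \<in> R\<close> RV by fastforce
    ultimately show "z \<in> {}" using y(2) by simp
  qed simp
  show "card (R \<union> shift_vec v ` S) = card R + card S"
    using card_Un_disjoint[OF finR finite_imageI[OF finS] disj] card_image[OF inj] by simp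
  have "3 dvd (\<Sum>x\<in>R \<union> shift_vec v ` S. x j * x l)" for j l
  proof -
    have "(\<Sum>x\<in>shift_vec v ` S. x j * x l) = (\<Sum>y\<in>S. shift_vec v y j * shift_vec v y l)"
      by (rule sum.reindex[OF inj, unfolded comp_def])
    also have "\<dots> = (if v \<le> j \<and> v \<le> l then (\<Sum>y\<in>S. y (j - v) * y (l - v)) else 0)"
      by (cases "v \<le> j"; cases "v \<le> l") (simp_all add: shift_vec_def)
    finally have "3 dvd (\<Sum>x\<in>shift_vec v ` S. x j * x l)"
      using gramS by simp
    then show ?thesis
      using gramR by (simp add: sum.union_disjoint[OF finR finite_imageI[OF finS] disj])
  qed
  moreover have "R \<union> shift_vec v ` S \<subseteq> F3vecs (v + w)"
    using RV SV F3vecs_mono[of v "v + w"] shift_vec_in_F3vecs by auto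
  ultimately show "self_orthogonal (v + w) (R \<union> shift_vec v ` S)"
    unfolding self_orthogonal_def using finR finS leadR leadS lead_one_shift_vec by blast
qed

section \<open>Explicit examples\<close>

definition vec_of_list :: "int list \<Rightarrow> nat \<Rightarrow> int" where
  "vec_of_list r i = (if i < length r then r ! i else 0)"

definition valid_rows :: "nat \<Rightarrow> int list list \<Rightarrow> bool" where
  "valid_rows k rows \<longleftrightarrow> distinct rows
     \<and> (\<forall>r\<in>set rows. length r = k \<and> (\<forall>e\<in>set r. e \<in> {0,1,2})
          \<and> (\<exists>j\<in>set [0..<k]. r ! j = 1 \<and> (\<forall>i\<in>set [0..<j]. r ! i = 0)))
     \<and> (\<forall>j\<in>set [0..<k]. \<forall>l\<in>set [0..<k]. 3 dvd sum_list (map (\<lambda>r. r ! j * r ! l) rows))"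

lemma inj_on_vec_of_list:
  assumes "\<forall>r\<in>A. length r = k"
  shows "inj_on vec_of_list A"
proof (rule inj_onI)
  fix r s assume r: "r \<in> A" and s: "s \<in> A" and eq: "vec_of_list r = vec_of_list s"
  show "r = s"
  proof (rule nth_equalityI)
    show "length r = length s" using assms r s by simp
    show "r ! i = s ! i" if "i < length r" for i
      using fun_cong[OF eq, of i] that \<open>length r = length s\<close> by (simp add: vec_of_list_def)
  qed
qed

lemma sum_vec_of_list_products:
  assumes "distinct rows" "\<forall>r\<in>set rows. length r = k"
  shows "(\<Sum>x\<in>vec_of_list ` set rows. x j * x l)
    = (if j < k \<and> l < k then sum_list (map (\<lambda>r. r ! j * r ! l) rows) else 0)"
proof -
  have "(\<Sum>x\<in>vec_of_list ` set rows. x j * x l)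
      = sum_list (map (\<lambda>r. vec_of_list r j * vec_of_list r l) rows)"
    using inj_on_vec_of_list[OF assms(2)]
    by (simp add: sum.reindex sum.distinct_set_conv_list[OF assms(1)])
  also have "\<dots> = (if j < k \<and> l < k then sum_list (map (\<lambda>r. r ! j * r ! l) rows) else 0)"
  proof (cases "j < k \<and> l < k")
    case True
    then show ?thesis
      using assms(2) by (auto simp: vec_of_list_def intro!: arg_cong[where f = sum_list] map_cong)
  next
    case False
    then have "map (\<lambda>r. vec_of_list r j * vec_of_list r l) rows = map (\<lambda>r. 0) rows"
      using assms(2) by (intro map_cong) (auto simp: vec_of_list_def)
    then show ?thesis
      unfolding if_not_P[OF False] by (simp add: map_replicate_const sum_list_replicate)
  qed
  finally show ?thesis .
qed

lemma self_orthogonal_vec_of_list: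
  assumes "valid_rows k rows"
  shows "self_orthogonal k (vec_of_list ` set rows)" and "card (vec_of_list ` set rows) = length rows"
proof -
  have dist: "distinct rows"
    and row: "\<And>r. r \<in> set rows \<Longrightarrow> length r = k \<and> (\<forall>e\<in>set r. e \<in> {0,1,2})
                \<and> (\<exists>j\<in>{0..<k}. r ! j = 1 \<and> (\<forall>i\<in>{0..<j}. r ! i = 0))"
    and gram: "\<And>j l. j < k \<Longrightarrow> l < k \<Longrightarrow> 3 dvd sum_list (map (\<lambda>r. r ! j * r ! l) rows)"
    using assms unfolding valid_rows_def by auto
  have len: "\<forall>r\<in>set rows. length r = k" using row by blast
  show "card (vec_of_list ` set rows) = length rows"
    using card_image[OF inj_on_vec_of_list[OF len]] distinct_card[OF dist] by simp
  have "vec_of_list r \<in> F3vecs k" if "r \<in> set rows" for r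
    using row[OF that] nth_mem by (auto simp: F3vecs_def vec_of_list_def)
  moreover have "lead_one (vec_of_list r)" if "r \<in> set rows" for r
    using row[OF that] unfolding lead_one_def vec_of_list_def by force
  moreover have "3 dvd (\<Sum>x\<in>vec_of_list ` set rows. x j * x l)" for j l
    using gram by (simp add: sum_vec_of_list_products[OF dist len])
  ultimately show "self_orthogonal k (vec_of_list ` set rows)"
    unfolding self_orthogonal_def by blast
qed

definition line_rows :: "int list list" where
  "line_rows = [[1,0],[0,1],[1,1],[1,2]]"

definition affine_plane_rows :: "int list list" where
  "affine_plane_rows = [[0,0,1],[1,0,0],[1,1,2],[1,2,0],[1,0,2],[0,1,1],[0,1,0],[1,2,1],[1,1,1]]"

definition elliptic_quadric_rows :: "int list list" where
  "elliptic_quadric_rows = [[0,1,1,2],[1,1,2,2],[0,0,1,2],[1,1,1,1],[1,2,1,1],[0,0,1,0],[1,2,1,2],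
     [1,0,1,2],[1,0,0,1],[0,1,1,1]]"

definition golay_rows :: "int list list" where
  "golay_rows = [[0,0,0,1,0],[0,1,1,0,1],[1,0,0,0,2],[1,0,0,2,1],[1,2,0,1,0],[1,2,0,1,2],[0,0,1,1,0],
     [0,1,1,1,0],[0,1,2,2,2],[1,0,2,1,0],[1,2,1,1,1]]"

lemma valid_line_rows: "valid_rows 2 line_rows"
  unfolding valid_rows_def line_rows_def by code_simp

lemma valid_affine_plane_rows: "valid_rows 3 affine_plane_rows"
  unfolding valid_rows_def affine_plane_rows_def by code_simp

lemma valid_elliptic_quadric_rows: "valid_rows 4 elliptic_quadric_rows"
  unfolding valid_rows_def elliptic_quadric_rows_def by code_simp

lemma valid_golay_rows: "valid_rows 5 golay_rows"
  unfolding valid_rows_def golay_rows_def by code_simp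

lemma exists_self_orthogonal:
  assumes "valid_rows k rows" "2 \<le> k"
  shows "\<exists>v R. 2 \<le> v \<and> self_orthogonal v R \<and> card R = 4 * q + length rows"
proof (induction q)
  case 0
  show ?case
    using self_orthogonal_vec_of_list[OF assms(1)] assms(2)
    by (intro exI[of _ k] exI[of _ "vec_of_list ` set rows"]) simp
next
  case (Suc q)
  then obtain v R where R: "2 \<le> v" "self_orthogonal v R" "card R = 4 * q + length rows"
    by blast
  define L where "L = vec_of_list ` set line_rows"
  have "length line_rows = 4" by (simp add: line_rows_def)
  then have L: "self_orthogonal 2 L" "card L = 4"
    using self_orthogonal_vec_of_list[OF valid_line_rows] by (simp_all add: L_def)
  show ?case
  proof (intro exI conjI)
    show "2 \<le> 2 + v" by simp
    show "self_orthogonal (2 + v) (L \<union> shift_vec 2 ` R)"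
      by (rule self_orthogonal_juxtapose(1)[OF L(1) R(2)])
    show "card (L \<union> shift_vec 2 ` R) = 4 * Suc q + length rows"
      using self_orthogonal_juxtapose(2)[OF L(1) R(2)] L(2) R(3) by simp
  qed
qed

lemma exists_three_divisible_point_set:
  assumes "valid_rows k rows" "2 \<le> k" "length rows = b" "0 < b"
  shows "\<exists>v C. 2 \<le> v \<and> C \<subseteq> PG_points v \<and> C \<noteq> {} \<and> divisible_pts 3 v C
    \<and> card C = 4 * q + b"
proof -
  have "\<exists>v R. 2 \<le> v \<and> self_orthogonal v R \<and> card R = 4 * q + b"
    using exists_self_orthogonal[OF assms(1,2), of q] by (simp only: assms(3))
  then obtain v R where R: "2 \<le> v" "self_orthogonal v R" "card R = 4 * q + b"
    by blast
  note C = self_orthogonal_points[OF R(2)]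
  show ?thesis
  proof (intro exI conjI)
    show "2 \<le> v" by (rule R(1))
    show "F3span1 ` R \<subseteq> PG_points v" by (rule C(1))
    show "divisible_pts 3 v (F3span1 ` R)" by (rule C(3))
    show "card (F3span1 ` R) = 4 * q + b" using C(2) R(3) by simp
    then show "F3span1 ` R \<noteq> {}" using assms(4) by auto
  qed
qed

lemma exists_three_divisible_point_set_of_card:
  assumes "b \<in> {4, 9, 10, 11}"
  shows "\<exists>v C. 2 \<le> v \<and> C \<subseteq> PG_points v \<and> C \<noteq> {} \<and> divisible_pts 3 v C
    \<and> card C = 4 * q + b"
proof -
  have "length line_rows = 4" "length affine_plane_rows = 9"
    "length elliptic_quadric_rows = 10" "length golay_rows = 11"
    by (simp_all add: line_rows_def affine_plane_rows_def elliptic_quadric_rows_def golay_rows_def)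
  then show ?thesis
    using assms exists_three_divisible_point_set[OF valid_line_rows]
      exists_three_divisible_point_set[OF valid_affine_plane_rows]
      exists_three_divisible_point_set[OF valid_elliptic_quadric_rows]
      exists_three_divisible_point_set[OF valid_golay_rows]
    by fastforce
qed

theorem lemma6p7:
  shows "(\<forall>v C. v \<ge> 2 \<longrightarrow> C \<subseteq> PG_points v \<longrightarrow> C \<noteq> {} \<longrightarrow> divisible_pts 3 v C
            \<longrightarrow> card C = 4 \<or> card C \<ge> 8)
       \<and> (\<forall>n::nat. (n = 4 \<or> n \<ge> 8) \<longrightarrow>
            (\<exists>v C. v \<ge> 2 \<and> C \<subseteq> PG_points v \<and> C \<noteq> {} \<and> divisible_pts 3 v C \<and> card C = n))"
proof (intro conjI allI impI)
  fix v C assume "v \<ge> 2" "C \<subseteq> PG_points v" "C \<noteq> {}" "divisible_pts 3 v C"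
  then show "card C = 4 \<or> card C \<ge> 8"
    by (rule card_three_divisible_point_set)
next
  fix n :: nat assume "n = 4 \<or> n \<ge> 8"
  then have "\<exists>q b. n = 4 * q + b \<and> (b = 4 \<or> b = 9 \<or> b = 10 \<or> b = 11)"
    by presburger
  then obtain q b where "n = 4 * q + b" "b \<in> {4, 9, 10, 11}"
    by auto
  then show "\<exists>v C. v \<ge> 2 \<and> C \<subseteq> PG_points v \<and> C \<noteq> {} \<and> divisible_pts 3 v C \<and> card C = n"
    using exists_three_divisible_point_set_of_card by blast
qed

end
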